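(* Let $f(\mathbf{x}) \in \mathbb{C}[\mathbf{x}]$ be a polynomial that is set-multilinear with respect to a partition $\mathbf{x} = \mathbf{x}_1 \sqcup \cdots \sqcup \mathbf{x}_d$ of its variables. Then the smallest width of a commutative set-multilinear ABP (with respect to this partition) computing $f$ is at most $\mathrm{DPD}(f)$.
   Context: A polynomial is set-multilinear with respect to a partition $\mathbf{x} = \mathbf{x}_1\sqcup\cdots\sqcup\mathbf{x}_d$ if each of its monomials contains exactly one variable from each part $\mathbf{x}_j$ (with degree one). Write $\mathbf{x}_j = \{x_{j,1},\ldots,x_{j,|\mathbf{x}_j|}\}$. A set-multilinear ABP (smABP) of width $w$ computing $f$ consists of a permutation $\sigma$ of $[d]$, matrices $A_{j,k}\in\mathbb{C}^{w\times w}$ for $j\in[d]$, $1\le k\le |\mathbf{x}_j|$, and vectors $\mathbf{u},\mathbf{v}\in\mathbb{C}^w$ such that $f(\mathbf{x}) = \mathbf{u}^T M_{\sigma(1)}(\mathbf{x}_{\sigma(1)})\cdots M_{\sigma(d)}(\mathbf{x}_{\sigma(d)})\mathbf{v}$, where $M_j(\mathbf{x}_j) = \sum_{k=1}^{|\mathbf{x}_j|} A_{j,k} x_{j,k}$; the $A_{j,k}$ are its coefficient matrices. A commutative smABP is one whose coefficient matrices all pairwise commute. For $f \in \mathbb{C}[\mathbf{x}]$, $\mathrm{DPD}(f) := \dim_{\mathbb{C}}\mathrm{span}_{\mathbb{C}}\{\partial_{\mathbf{e}} f : \mathbf{e}\}$ is the dimension of the span of all partial derivatives of $f$ of all orders (including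 $f$ itself), where $\partial_{\mathbf{e}} f$ is the partial derivative with respect to the monomial $\mathbf{x}^{\mathbf{e}}$. *)

theory Defs
  imports "Jordan_Normal_Form.Matrix" "HOL-Library.Function_Algebras"
begin

text \<open>Polynomials in C[x] over variables of type 'v are represented by their coefficient
  functions: a polynomial is a map from exponent vectors (monomials) ('v => nat)
  to coefficients.  Variables x_{j,k} are the pairs (j,k) with j < d and k < n j
  (0-based indices).\<close>

type_synonym 'v cpoly = "('v \<Rightarrow> nat) \<Rightarrow> complex"

definition sm_mono :: "nat \<Rightarrow> (nat \<Rightarrow> nat) \<Rightarrow> (nat \<times> nat \<Rightarrow> nat)" where
  "sm_mono d s = (\<lambda>(j,k). if j < d \<and> k = s j then 1 else 0)"

definition set_multilinear :: "nat \<Rightarrow> (nat \<Rightarrow> nat) \<Rightarrow> (nat \<times> nat) cpoly \<Rightarrow> bool" where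
  "set_multilinear d n f \<longleftrightarrow>
     (\<forall>m. f m \<noteq> 0 \<longrightarrow> (\<exists>s. (\<forall>j<d. s j < n j) \<and> m = sm_mono d s))"

text \<open>Partial derivative of f with respect to the monomial x^e:
  coefficient of x^m in it is (prod_v (m_v+1)...(m_v+e_v)) * coeff of x^(m+e) in f.\<close>
definition pdiff :: "('v \<Rightarrow> nat) \<Rightarrow> 'v cpoly \<Rightarrow> 'v cpoly" where
  "pdiff e f = (\<lambda>m. (\<Prod>v\<in>{v. e v \<noteq> 0}. pochhammer (of_nat (m v + 1)) (e v)) * f (\<lambda>v. m v + e v))"

definition DPD :: "'v cpoly \<Rightarrow> nat" where
  "DPD f = vector_space.dim (\<lambda>(c::complex) (g::'v cpoly). (\<lambda>m. c * g m))
            {pdiff e f | e. finite {v. e v \<noteq> 0}}"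

text \<open>Polynomial computed by the smABP u^T M_{\<sigma> 0}(x_{\<sigma> 0}) ... M_{\<sigma>(d-1)}(x_{\<sigma>(d-1)}) v,
  where M_j(x_j) = sum_{k < n j} A j k * x_{j,k}.  Expanding the product of sums, the
  coefficient of each monomial is the sum over the choices s (one variable per part) giving it.\<close>
definition smABP_poly :: "nat \<Rightarrow> (nat \<Rightarrow> nat) \<Rightarrow> nat \<Rightarrow> (nat \<Rightarrow> nat)
     \<Rightarrow> (nat \<Rightarrow> nat \<Rightarrow> complex mat) \<Rightarrow> complex vec \<Rightarrow> complex vec \<Rightarrow> (nat \<times> nat) cpoly" where
  "smABP_poly d n w \<sigma> A u v = (\<lambda>m.
     \<Sum>s\<in>Pi\<^sub>E {..<d} (\<lambda>j. {..<n j}).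
       (if m = sm_mono d s
        then u \<bullet> (foldr (*) (map (\<lambda>i. A (\<sigma> i) (s (\<sigma> i))) [0..<d]) (1\<^sub>m w) *\<^sub>v v)
        else 0))"

definition comm_smABP :: "nat \<Rightarrow> (nat \<Rightarrow> nat) \<Rightarrow> (nat \<times> nat) cpoly \<Rightarrow> nat \<Rightarrow> bool" where
  "comm_smABP d n f w \<longleftrightarrow>
     (\<exists>\<sigma> A u v. \<sigma> permutes {..<d}
        \<and> (\<forall>j<d. \<forall>k<n j. A j k \<in> carrier_mat w w)
        \<and> (\<forall>j<d. \<forall>k<n j. \<forall>j'<d. \<forall>k'<n j'. A j k * A j' k' = A j' k' * A j k)
        \<and> u \<in> carrier_vec w \<and> v \<in> carrier_vec w
        \<and> smABP_poly d n w \<sigma> A u v = f)"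

end

theory Submission
  imports Defs
begin

(* The partial derivatives of f span a space V of dimension DPD f, finite because f is a
   polynomial, and V is stable under the pairwise commuting operators d/dx_(j,k). In a basis
   of V these operators become commuting DPD f x DPD f matrices A_(j,k). With v the coordinate
   vector of f and u the functional "constant term", u^T A_(0,s 0) ... A_(d-1,s (d-1)) v is the
   constant term of the derivative of f along the distinct variables x_(0,s 0), ...,
   x_(d-1,s (d-1)), i.e. the coefficient of their product in f. Hence the identity ordering
   and these matrices form a commutative smABP of width DPD f. *)

locale indexed_basis = vector_space scale
  for scale :: "'a::field \<Rightarrow> 'b::ab_group_add \<Rightarrow> 'b" (infixr \<open>*s\<close> 75) +
  fixes N :: nat and bas :: "nat \<Rightarrow> 'b"
  assumes independent_bas: "independent (bas ` {..<N})"
    and inj_on_bas: "inj_on bas {..<N}"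
begin

abbreviation basis_span :: "'b set" where
  "basis_span \<equiv> span (bas ` {..<N})"

definition coord :: "'b \<Rightarrow> 'a vec" where
  "coord x = vec N (\<lambda>i. representation (bas ` {..<N}) x (bas i))"

definition operator_mat :: "('b \<Rightarrow> 'b) \<Rightarrow> 'a mat" where
  "operator_mat T = mat N N (\<lambda>(i, l). coord (T (bas l)) $ i)"

lemma coord_carrier [simp]: "coord x \<in> carrier_vec N"
  and dim_vec_coord [simp]: "dim_vec (coord x) = N"
  by (simp_all add: coord_def)

lemma vec_nth_coord [simp]: "vec N (\<lambda>i. coord x $ i) = coord x"
  by (rule eq_vecI) (simp_all add: coord_def)

lemma operator_mat_carrier [simp]: "operator_mat T \<in> carrier_mat N N"
  by (simp add: operator_mat_def)

lemma sum_coord_scale: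
  assumes "x \<in> basis_span"
  shows "(\<Sum>l<N. coord x $ l *s bas l) = x"
proof -
  have "x = (\<Sum>y\<in>bas ` {..<N}. representation (bas ` {..<N}) x y *s y)"
    using sum_representation_eq[OF independent_bas assms] by simp
  also have "\<dots> = (\<Sum>l<N. coord x $ l *s bas l)"
    by (simp add: sum.reindex[OF inj_on_bas] coord_def)
  finally show ?thesis ..
qed

lemma coord_sum_scale:
  assumes "i < N" and "\<And>l. l \<in> L \<Longrightarrow> y l \<in> basis_span"
  shows "coord (\<Sum>l\<in>L. c l *s y l) $ i = (\<Sum>l\<in>L. c l * coord (y l) $ i)"
  using assms
  by (simp add: coord_def representation_sum[OF independent_bas] span_scale
      representation_scale[OF independent_bas])

lemma linear_eq_sum_coord:
  assumes "Vector_Spaces.linear scale scale T" and "x \<in> basis_span"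
  shows "T x = (\<Sum>l<N. coord x $ l *s T (bas l))"
proof -
  interpret T: module_hom scale scale T
    using assms(1) by (rule module_hom_linearI)
  show ?thesis
    by (subst sum_coord_scale[OF assms(2), symmetric]) (simp add: T.sum T.scale)
qed

lemma linear_image_basis_span:
  assumes "Vector_Spaces.linear scale scale T" and "\<And>l. l < N \<Longrightarrow> T (bas l) \<in> basis_span"
    and "x \<in> basis_span"
  shows "T x \<in> basis_span"
  unfolding linear_eq_sum_coord[OF assms(1,3)] using assms(2) by (auto intro!: span_sum span_scale)

lemma operator_mat_mult_coord:
  assumes "Vector_Spaces.linear scale scale T" and "\<And>l. l < N \<Longrightarrow> T (bas l) \<in> basis_span"
    and "x \<in> basis_span"
  shows "operator_mat T *\<^sub>v coord x = coord (T x)"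
proof (rule eq_vecI)
  fix i assume "i < dim_vec (coord (T x))"
  then have i: "i < N" by simp
  have "coord (T x) $ i = coord (\<Sum>l<N. coord x $ l *s T (bas l)) $ i"
    by (simp only: linear_eq_sum_coord[OF assms(1,3)])
  also have "\<dots> = (\<Sum>l<N. coord x $ l * coord (T (bas l)) $ i)"
    by (rule coord_sum_scale[OF i]) (simp add: assms(2))
  finally show "(operator_mat T *\<^sub>v coord x) $ i = coord (T x) $ i"
    using i by (simp add: operator_mat_def scalar_prod_def atLeast0LessThan mult.commute)
qed (simp add: operator_mat_def)

lemma operator_mat_comp:
  assumes "Vector_Spaces.linear scale scale T" and "\<And>l. l < N \<Longrightarrow> T (bas l) \<in> basis_span"
    and "\<And>l. l < N \<Longrightarrow> S (bas l) \<in> basis_span"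
  shows "operator_mat T * operator_mat S = operator_mat (T \<circ> S)"
proof (rule eq_matI)
  fix i l assume "i < dim_row (operator_mat (T \<circ> S))" "l < dim_col (operator_mat (T \<circ> S))"
  then have il: "i < N" "l < N" by (simp_all add: operator_mat_def)
  have "(operator_mat T * operator_mat S) $$ (i, l) = (operator_mat T *\<^sub>v coord (S (bas l))) $ i"
    using il by (simp add: operator_mat_def)
  also have "\<dots> = coord (T (S (bas l))) $ i"
    using operator_mat_mult_coord[OF assms(1,2) assms(3)[OF il(2)]] by simp
  also have "\<dots> = operator_mat (T \<circ> S) $$ (i, l)"
    using il by (simp add: operator_mat_def)
  finally show "(operator_mat T * operator_mat S) $$ (i, l) = operator_mat (T \<circ> S) $$ (i, l)" .
qed (simp_all add: operator_mat_def)

lemma operator_mat_commute: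
  assumes "Vector_Spaces.linear scale scale T" and "Vector_Spaces.linear scale scale S"
    and "\<And>l. l < N \<Longrightarrow> T (bas l) \<in> basis_span"
    and "\<And>l. l < N \<Longrightarrow> S (bas l) \<in> basis_span"
    and "T \<circ> S = S \<circ> T"
  shows "operator_mat T * operator_mat S = operator_mat S * operator_mat T"
  using operator_mat_comp[of T S] operator_mat_comp[of S T] assms by simp

lemma foldr_operator_mat_mult_coord:
  assumes "\<And>i. Vector_Spaces.linear scale scale (T i)"
    and "\<And>i l. l < N \<Longrightarrow> T i (bas l) \<in> basis_span"
    and "x \<in> basis_span"
  shows "foldr (*) (map (\<lambda>i. operator_mat (T i)) is) (1\<^sub>m N) *\<^sub>v coord x = coord (foldr T is x)"
proof (induction "is")
  case (Cons i "is")
  have carrier: "foldr (*) (map (\<lambda>i. operator_mat (T i)) is) (1\<^sub>m N) \<in> carrier_mat N N"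
    by (induction "is") (auto intro: mult_carrier_mat[OF operator_mat_carrier])
  have "foldr T is x \<in> basis_span"
    using assms by (induction "is") (auto intro: linear_image_basis_span)
  then show ?case
    using Cons.IH assms(1,2)
    by (simp add: assoc_mult_mat_vec[OF operator_mat_carrier carrier coord_carrier]
        operator_mat_mult_coord)
qed (simp add: coord_def)

lemma scalar_prod_coord:
  assumes "additive \<phi>" and "\<And>c y. \<phi> (c *s y) = c * \<phi> y" and "x \<in> basis_span"
  shows "vec N (\<lambda>l. \<phi> (bas l)) \<bullet> coord x = \<phi> x"
proof -
  have "\<phi> x = (\<Sum>l<N. coord x $ l * \<phi> (bas l))"
    by (subst sum_coord_scale[OF assms(3), symmetric]) (simp add: additive.sum[OF assms(1)] assms(2))
  then show ?thesis
    by (auto simp: scalar_prod_def atLeast0LessThan mult.commute intro: sum.cong)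
qed

end

interpretation complex_fun: vector_space "\<lambda>(c::complex) (g::'a \<Rightarrow> complex) m. c * g m"
  by unfold_locales (auto simp: fun_eq_iff algebra_simps)

definition partials :: "'v cpoly \<Rightarrow> 'v cpoly set" where
  "partials f = {pdiff e f | e. finite {v. e v \<noteq> 0}}"

lemma DPD_eq_dim_partials: "DPD f = complex_fun.dim (partials f)"
  by (simp add: DPD_def partials_def)

definition pdiff_var :: "'v \<Rightarrow> 'v cpoly \<Rightarrow> 'v cpoly" where
  "pdiff_var v g = (\<lambda>m. of_nat (Suc (m v)) * g (m(v := Suc (m v))))"

lemma linear_pdiff_var:
  "Vector_Spaces.linear (\<lambda>c g m. c * g m) (\<lambda>c g m. c * g m) (pdiff_var v)"
  unfolding Vector_Spaces.linear_iff
  by (simp add: complex_fun.vector_space_axioms pdiff_var_def fun_eq_iff algebra_simps)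

lemma pdiff_var_commute: "pdiff_var v \<circ> pdiff_var w = pdiff_var w \<circ> pdiff_var v"
  by (auto simp: pdiff_var_def fun_eq_iff fun_upd_twist)

lemma pdiff_eq_prod_superset:
  assumes "finite Z" and "{v. e v \<noteq> 0} \<subseteq> Z"
  shows "pdiff e f m = (\<Prod>v\<in>Z. pochhammer (of_nat (m v + 1)) (e v)) * f (\<lambda>v. m v + e v)"
  unfolding pdiff_def using assms by (subst prod.mono_neutral_left[of Z]) auto

lemma pdiff_var_pdiff:
  assumes "finite {w. e w \<noteq> 0}"
  shows "pdiff_var v (pdiff e f) = pdiff (e(v := Suc (e v))) f"
proof
  fix m :: "'a \<Rightarrow> nat"
  define Z where "Z = insert v {w. e w \<noteq> 0}"
  define m' where "m' = m(v := Suc (m v))"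
  define e' where "e' = e(v := Suc (e v))"
  have Z: "finite Z" "v \<in> Z" "{w. e w \<noteq> 0} \<subseteq> Z" "{w. e' w \<noteq> 0} \<subseteq> Z"
    using assms by (auto simp: Z_def e'_def)
  have same_rest: "(\<Prod>w\<in>Z - {v}. pochhammer (of_nat (m' w + 1)) (e w)) =
      (\<Prod>w\<in>Z - {v}. pochhammer (of_nat (m w + 1)) (e' w) :: complex)"
    by (rule prod.cong) (auto simp: m'_def e'_def)
  have m'v: "m' v = Suc (m v)" and e'v: "e' v = Suc (e v)"
    by (simp_all add: m'_def e'_def)
  have shift: "(\<lambda>w. m' w + e w) = (\<lambda>w. m w + e' w)"
    by (auto simp: m'_def e'_def)
  have "pdiff_var v (pdiff e f) m = of_nat (Suc (m v)) * pdiff e f m'"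
    by (simp add: pdiff_var_def m'_def)
  also have "\<dots> = of_nat (Suc (m v)) * pochhammer (of_nat (m' v + 1)) (e v)
      * (\<Prod>w\<in>Z - {v}. pochhammer (of_nat (m' w + 1)) (e w)) * f (\<lambda>w. m' w + e w)"
    using Z by (simp add: pdiff_eq_prod_superset[of Z] prod.remove[of Z v] mult_ac)
  also have "\<dots> = pochhammer (of_nat (m v + 1)) (Suc (e v))
      * (\<Prod>w\<in>Z - {v}. pochhammer (of_nat (m w + 1)) (e' w)) * f (\<lambda>w. m w + e' w)"
    unfolding same_rest shift by (simp add: pochhammer_rec m'v e'v)
  also have "\<dots> = pdiff e' f m"
    using Z by (simp add: pdiff_eq_prod_superset[of Z] prod.remove[of Z v] e'v mult_ac)
  finally show "pdiff_var v (pdiff e f) m = pdiff (e(v := Suc (e v))) f m"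
    by (simp add: e'_def)
qed

lemma pdiff_var_partials:
  assumes "g \<in> partials f"
  shows "pdiff_var v g \<in> partials f"
proof -
  obtain e where e: "g = pdiff e f" "finite {w. e w \<noteq> 0}"
    using assms by (auto simp: partials_def)
  have "finite {w. (e(v := Suc (e v))) w \<noteq> 0}"
    by (rule rev_finite_subset[of "insert v {w. e w \<noteq> 0}"]) (use e(2) in auto)
  then show ?thesis
    unfolding partials_def e(1) pdiff_var_pdiff[OF e(2)] by blast
qed

lemma self_in_partials: "f \<in> partials f"
proof -
  have "f = pdiff (\<lambda>_. 0) f \<and> finite {v. (0::nat) \<noteq> 0}"
    by (simp add: pdiff_def)
  then show ?thesis
    unfolding partials_def by blast
qed

lemma foldr_pdiff_var_distinct:
  assumes "distinct ws" and "\<forall>x\<in>set ws. m x = 0"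
  shows "foldr pdiff_var ws g m = g (\<lambda>x. m x + (if x \<in> set ws then 1 else 0))"
  using assms
proof (induction ws arbitrary: m)
  case (Cons w ws)
  have "foldr pdiff_var (w # ws) g m = foldr pdiff_var ws g (m(w := 1))"
    using Cons.prems by (simp add: pdiff_var_def)
  also have "\<dots> = g (\<lambda>x. (m(w := 1)) x + (if x \<in> set ws then 1 else 0))"
    using Cons.prems by (intro Cons.IH) auto
  also have "(\<lambda>x. (m(w := 1)) x + (if x \<in> set ws then 1 else 0)) =
      (\<lambda>x. m x + (if x \<in> set (w # ws) then 1 else 0))"
    using Cons.prems by (auto simp: fun_eq_iff)
  finally show ?case .
qed simp

lemma foldr_pdiff_var_partials: "foldr pdiff_var xs f \<in> partials f"
  by (induction xs) (simp_all add: self_in_partials pdiff_var_partials)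

lemma foldr_pdiff_var_sm_mono:
  "foldr pdiff_var (map (\<lambda>j. (j, s j)) [0..<d]) g (\<lambda>_. 0) = g (sm_mono d s)"
proof -
  have "(\<lambda>x. 0 + (if x \<in> set (map (\<lambda>j. (j, s j)) [0..<d]) then 1 else 0)) = sm_mono d s"
    by (auto simp: sm_mono_def fun_eq_iff)
  then show ?thesis
    by (simp add: foldr_pdiff_var_distinct distinct_map inj_on_def)
qed

lemma sum_fun_apply: "(\<Sum>i\<in>I. F i) x = (\<Sum>i\<in>I. F i x)"
  by (induction I rule: infinite_finite_induct) auto

lemma finite_lower_set_fun:
  fixes m :: "'v \<Rightarrow> nat"
  assumes "finite {v. m v \<noteq> 0}"
  shows "finite {m'. m' \<le> m}"
proof -
  let ?A = "{v. m v \<noteq> 0}"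
  have "{m'. m' \<le> m} \<subseteq>
      {m'. \<forall>v. (v \<in> ?A \<longrightarrow> m' v \<in> (\<Union>w\<in>?A. {..m w})) \<and> (v \<notin> ?A \<longrightarrow> m' v = 0)}"
    by (auto simp: le_fun_def) (metis le_zero_eq)
  moreover have "finite \<dots>"
    using assms by (intro finite_set_of_finite_funs) auto
  ultimately show ?thesis
    by (rule finite_subset)
qed

lemma partials_finite_span:
  fixes f :: "'v cpoly"
  assumes "finite {m. f m \<noteq> 0}" and "\<And>m. f m \<noteq> 0 \<Longrightarrow> finite {v. m v \<noteq> 0}"
  obtains S where "finite S" and "partials f \<subseteq> complex_fun.span S"
proof
  define L where "L = (\<Union>m\<in>{m. f m \<noteq> 0}. {m'. m' \<le> m})"
  define \<delta> :: "('v \<Rightarrow> nat) \<Rightarrow> 'v cpoly" where "\<delta> = (\<lambda>m0 m. if m = m0 then 1 else 0)"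
  have "finite L"
    unfolding L_def by (intro finite_UN_I assms(1) finite_lower_set_fun assms(2)) simp
  then show "finite (\<delta> ` L)"
    by simp
  show "partials f \<subseteq> complex_fun.span (\<delta> ` L)"
  proof
    fix g assume "g \<in> partials f"
    then obtain e where g: "g = pdiff e f"
      by (auto simp: partials_def)
    have supp: "m \<in> L" if "g m \<noteq> 0" for m
    proof -
      have "f (\<lambda>v. m v + e v) \<noteq> 0"
        using that by (simp add: g pdiff_def)
      then show ?thesis
        by (auto simp: L_def le_fun_def)
    qed
    have "g = (\<Sum>m0\<in>L. (\<lambda>m. g m0 * \<delta> m0 m))"
    proof
      fix m
      show "g m = (\<Sum>m0\<in>L. (\<lambda>m. g m0 * \<delta> m0 m)) m"
        using supp \<open>finite L\<close> by (auto simp: sum_fun_apply \<delta>_def if_distrib[of "(*) _"] cong: if_cong)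
    qed
    also have "\<dots> \<in> complex_fun.span (\<delta> ` L)"
      by (intro complex_fun.span_sum complex_fun.span_scale complex_fun.span_base) auto
    finally show "g \<in> complex_fun.span (\<delta> ` L)" .
  qed
qed

lemma inj_on_sm_mono: "inj_on (sm_mono d) (Pi\<^sub>E {..<d} B)"
proof (rule inj_onI)
  fix s s' assume s: "s \<in> Pi\<^sub>E {..<d} B" "s' \<in> Pi\<^sub>E {..<d} B" "sm_mono d s = sm_mono d s'"
  have "s j = s' j" if "j < d" for j
    using fun_cong[OF s(3), of "(j, s j)"] that by (simp add: sm_mono_def split: if_splits)
  then show "s = s'"
    using s(1,2) by (intro PiE_ext) auto
qed

lemma set_multilinear_support:
  assumes "set_multilinear d n f"
  shows "{m. f m \<noteq> 0} \<subseteq> sm_mono d ` Pi\<^sub>E {..<d} (\<lambda>j. {..<n j})"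
proof
  fix m assume "m \<in> {m. f m \<noteq> 0}"
  then obtain s where s: "\<forall>j<d. s j < n j" "m = sm_mono d s"
    using assms by (auto simp: set_multilinear_def)
  have "sm_mono d (restrict s {..<d}) = m"
    by (auto simp: s(2) sm_mono_def fun_eq_iff)
  moreover have "restrict s {..<d} \<in> Pi\<^sub>E {..<d} (\<lambda>j. {..<n j})"
    using s(1) by auto
  ultimately show "m \<in> sm_mono d ` Pi\<^sub>E {..<d} (\<lambda>j. {..<n j})"
    by blast
qed

lemma finite_support_sm_mono: "finite {x. sm_mono d s x \<noteq> 0}"
  by (rule finite_subset[of _ "(\<lambda>j. (j, s j)) ` {..<d}"]) (auto simp: sm_mono_def split: if_splits)

lemma smABP_poly_eqI:
  assumes "set_multilinear d n f"
    and "\<And>s. s \<in> Pi\<^sub>E {..<d} (\<lambda>j. {..<n j}) \<Longrightarrow>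
      u \<bullet> (foldr (*) (map (\<lambda>i. A (\<sigma> i) (s (\<sigma> i))) [0..<d]) (1\<^sub>m w) *\<^sub>v v) = f (sm_mono d s)"
  shows "smABP_poly d n w \<sigma> A u v = f"
proof
  fix m
  let ?S = "Pi\<^sub>E {..<d} (\<lambda>j. {..<n j})"
  have "smABP_poly d n w \<sigma> A u v m = (\<Sum>s\<in>?S. (\<lambda>x. if m = x then f m else 0) (sm_mono d s))"
    unfolding smABP_poly_def using assms(2) by (intro sum.cong) auto
  also have "\<dots> = (\<Sum>x\<in>sm_mono d ` ?S. if m = x then f m else 0)"
    by (simp add: sum.reindex[OF inj_on_sm_mono])
  also have "\<dots> = f m"
    using set_multilinear_support[OF assms(1)] by (auto simp: finite_PiE)
  finally show "smABP_poly d n w \<sigma> A u v m = f m" .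
qed

lemma comm_smABP_of_basis:
  assumes "set_multilinear d n f"
    and "indexed_basis (\<lambda>c g m. c * g m) N bas"
    and basis_partials: "bas ` {..<N} \<subseteq> partials f"
    and partials_span: "partials f \<subseteq> complex_fun.span (bas ` {..<N})"
  shows "comm_smABP d n f N"
proof -
  interpret B: indexed_basis "\<lambda>c g m. c * g m" N bas by fact
  define A where "A j k = B.operator_mat (pdiff_var (j, k))" for j k
  define u where "u = vec N (\<lambda>l. bas l (\<lambda>_. 0))"
  have stable: "pdiff_var x (bas l) \<in> B.basis_span" if "l < N" for x l
    using that basis_partials by (blast intro: partials_span[THEN subsetD] pdiff_var_partials)
  have commute: "A j k * A j' k' = A j' k' * A j k" for j k j' k'
    unfolding A_def by (intro B.operator_mat_commute linear_pdiff_var stable pdiff_var_commute)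
  have constant_term: "u \<bullet> B.coord g = g (\<lambda>_. 0)" if "g \<in> B.basis_span" for g
    unfolding u_def by (rule B.scalar_prod_coord[OF _ _ that]) (simp_all add: additive_def)
  have "u \<bullet> (foldr (*) (map (\<lambda>i. A (id i) (s (id i))) [0..<d]) (1\<^sub>m N) *\<^sub>v B.coord f)
      = f (sm_mono d s)" for s
  proof -
    define xs where "xs = map (\<lambda>j. (j, s j)) [0..<d]"
    have "map (\<lambda>i. A (id i) (s (id i))) [0..<d] = map (\<lambda>x. B.operator_mat (pdiff_var x)) xs"
      by (simp add: xs_def A_def)
    moreover have "f \<in> B.basis_span" and "foldr pdiff_var xs f \<in> B.basis_span"
      using self_in_partials foldr_pdiff_var_partials partials_span by blast+
    ultimately have "u \<bullet> (foldr (*) (map (\<lambda>i. A (id i) (s (id i))) [0..<d]) (1\<^sub>m N) *\<^sub>v B.coord f)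
        = foldr pdiff_var xs f (\<lambda>_. 0)"
      by (simp add: B.foldr_operator_mat_mult_coord[OF linear_pdiff_var stable] constant_term)
    then show ?thesis
      by (simp add: xs_def foldr_pdiff_var_sm_mono)
  qed
  then have "smABP_poly d n N id A u (B.coord f) = f"
    by (intro smABP_poly_eqI[OF assms(1)]) simp
  then show ?thesis
    unfolding comm_smABP_def using commute
    by (intro exI[of _ id] exI[of _ A] exI[of _ u] exI[of _ "B.coord f"])
      (auto simp: permutes_id A_def u_def)
qed

lemma comm_smABP_DPD:
  assumes "set_multilinear d n f"
  shows "comm_smABP d n f (DPD f)"
proof -
  have support: "{m. f m \<noteq> 0} \<subseteq> sm_mono d ` Pi\<^sub>E {..<d} (\<lambda>j. {..<n j})"
    using assms by (rule set_multilinear_support)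
  obtain S where S: "finite S" "partials f \<subseteq> complex_fun.span S"
  proof (rule partials_finite_span)
    show "finite {m. f m \<noteq> 0}"
      using support by (rule finite_subset) (simp add: finite_PiE)
    show "finite {v. m v \<noteq> 0}" if nonzero: "f m \<noteq> 0" for m
    proof -
      obtain s where "m = sm_mono d s"
        using nonzero support by blast
      then show ?thesis
        using finite_support_sm_mono by simp
    qed
  qed
  obtain B where B: "B \<subseteq> partials f" "complex_fun.independent B"
      "partials f \<subseteq> complex_fun.span B" "card B = DPD f"
    unfolding DPD_eq_dim_partials by (rule complex_fun.basis_exists)
  have "B \<subseteq> complex_fun.span S"
    using B(1) S(2) by (rule order_trans)
  then have "finite B"
    using complex_fun.independent_span_bound[OF S(1) B(2)] by simp
  then obtain bas where bas: "bij_betw bas {..<DPD f} B"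
    using ex_bij_betw_nat_finite[OF \<open>finite B\<close>] unfolding B(4) atLeast0LessThan by blast
  have image: "bas ` {..<DPD f} = B" and inj: "inj_on bas {..<DPD f}"
    using bas by (simp_all add: bij_betw_def)
  show ?thesis
  proof (rule comm_smABP_of_basis[OF assms])
    show "indexed_basis (\<lambda>c g m. c * g m) (DPD f) bas"
      using B(2) inj unfolding image[symmetric]
      by (intro indexed_basis.intro complex_fun.vector_space_axioms indexed_basis_axioms.intro)
  qed (simp_all add: image B)
qed

theorem theorem1p6:
  fixes d :: nat and n :: "nat \<Rightarrow> nat" and f :: "(nat \<times> nat) cpoly"
  assumes "set_multilinear d n f"
  shows "(\<exists>w. comm_smABP d n f w) \<and> (LEAST w. comm_smABP d n f w) \<le> DPD f"
proof -
  have "comm_smABP d n f (DPD f)"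
    using assms by (rule comm_smABP_DPD)
  then show ?thesis
    by (auto intro: Least_le)
qed

end
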